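(* Let $F$ be an algebraically closed field with $\mathrm{char}\,F\ne2$. Then the maximal Mathieu subspaces of $M_2(F)$ are exactly the following: (i) $I_2^\perp=\{b\in M_2(F):\mathrm{Tr}(b)=0\}$; (ii) the subspaces $F(\lambda_1e_1+\lambda_2e_2)+e_1M_2(F)e_2$, where $e_1,e_2$ are nonzero idempotents with $e_1+e_2=I_2$ and $\lambda_1,\lambda_2\in F$ are distinct, nonzero, with $\lambda_1+\lambda_2\ne0$; (iii) the subspaces $F(I_2+c)$ with $c\in M_2(F)$ nonzero and nilpotent.
   Context: Let $\mathcal A$ be an associative algebra over a field $F$. An $F$-subspace $M\subseteq\mathcal A$ is a Mathieu subspace (MS) of $\mathcal A$ if for all $a,b,c\in\mathcal A$ such that $a^m\in M$ for all $m\ge 1$, there exists $N$ (depending on $a,b,c$) such that $ba^mc\in M$ for all $m\ge N$. A maximal MS of $\mathcal A$ is a proper MS of $\mathcal A$ that is not properly contained in any proper MS of $\mathcal A$. *)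

theory Defs
  imports "HOL-Analysis.Analysis" "HOL-Computational_Algebra.Polynomial"
begin

text \<open>2x2 matrices over a field F are modelled as the type F^2^2 with matrix product **
  (note: the built-in times on vec is componentwise, so we define matrix powers explicitly).\<close>

type_synonym 'a mat2 = "'a^2^2"

definition msmult :: "'a::field \<Rightarrow> 'a mat2 \<Rightarrow> 'a mat2" where
  "msmult c A = (\<chi> i j. c * A $ i $ j)"

primrec mpow :: "'a::field mat2 \<Rightarrow> nat \<Rightarrow> 'a mat2" where
  "mpow A 0 = mat 1"
| "mpow A (Suc n) = A ** mpow A n"

definition is_subspace2 :: "'a::field mat2 set \<Rightarrow> bool" where
  "is_subspace2 M \<longleftrightarrow> 0 \<in> M \<and> (\<forall>x\<in>M. \<forall>y\<in>M. x + y \<in> M) \<and>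
     (\<forall>c x. x \<in> M \<longrightarrow> msmult c x \<in> M)"

definition mathieu_subspace2 :: "'a::field mat2 set \<Rightarrow> bool" where
  "mathieu_subspace2 M \<longleftrightarrow> is_subspace2 M \<and>
     (\<forall>a b c. (\<forall>m\<ge>1. mpow a m \<in> M) \<longrightarrow> (\<exists>N. \<forall>m\<ge>N. b ** mpow a m ** c \<in> M))"

definition maximal_mathieu_subspace2 :: "'a::field mat2 set \<Rightarrow> bool" where
  "maximal_mathieu_subspace2 M \<longleftrightarrow> mathieu_subspace2 M \<and> M \<noteq> UNIV \<and>
     (\<forall>M'. mathieu_subspace2 M' \<and> M' \<noteq> UNIV \<and> M \<subseteq> M' \<longrightarrow> M' = M)"

definition idempotent2 :: "'a::field mat2 \<Rightarrow> bool" where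
  "idempotent2 e \<longleftrightarrow> e ** e = e"

definition nilpotent2 :: "'a::field mat2 \<Rightarrow> bool" where
  "nilpotent2 c \<longleftrightarrow> (\<exists>k. mpow c k = 0)"

end

theory Submission
  imports Defs
begin

text \<open>
  A Mathieu subspace containing a nonzero idempotent \<open>e\<close> contains every \<open>b e c\<close>, hence all
  matrix units, hence everything. Conversely, in a subspace \<open>M\<close> of \<open>M\<^sub>2(F)\<close> without nonzero
  idempotents, \<open>a, a\<^sup>2 \<in> M\<close> forces \<open>a\<^sup>2 = 0\<close>, so \<open>M\<close> is a Mathieu subspace. The maximal Mathieu
  subspaces are therefore the maximal idempotent-free subspaces.

  An idempotent-free subspace contains no matrix of nonzero trace and zero determinant (it would
  be a multiple of an idempotent). If \<open>u \<in> M\<close> has nonzero trace and eigenvalues \<open>\<alpha>, \<beta>\<close>, looking at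
  \<open>det (u + t v)\<close> shows \<open>det v = 0\<close> and \<open>tr (u v) = 0\<close> for every traceless \<open>v \<in> M\<close>, and for
  \<open>2 \<times> 2\<close> matrices this gives \<open>u v = \<alpha> v\<close>, \<open>v u = \<beta> v\<close>, with one ordering of the eigenvalues
  serving all such \<open>v\<close>. For \<open>\<alpha> \<noteq> \<beta>\<close> this puts \<open>M\<close> inside \<open>F u + e\<^sub>1 M\<^sub>2(F) e\<^sub>2\<close> for the
  spectral idempotents \<open>e\<^sub>i\<close> of \<open>u\<close>; for \<open>\<alpha> = \<beta>\<close> it gives \<open>M \<subseteq> F u\<close> with \<open>u = \<alpha> (I + c)\<close>,
  \<open>c\<close> nilpotent; without such \<open>u\<close>, \<open>M\<close> is traceless. Each of the three resulting subspaces is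
  idempotent-free (this is where \<open>char F \<noteq> 2\<close> is used), and the same analysis applied to an
  idempotent-free subspace containing one of them shows that it is maximal.
\<close>

lemma matrix_mult_2_entry:
  "((x::'a::field mat2) ** y) $ i $ j = x$i$1 * y$1$j + x$i$2 * y$2$j"
  by (simp add: matrix_matrix_mult_def sum_2)

lemma trace_2: "trace (x::'a::field mat2) = x$1$1 + x$2$2"
  by (simp add: trace_def sum_2)

lemma mat2_eq_iff:
  "(x::'a::field mat2) = y \<longleftrightarrow> x$1$1 = y$1$1 \<and> x$1$2 = y$1$2 \<and> x$2$1 = y$2$1 \<and> x$2$2 = y$2$2"
  by (auto simp: vec_eq_iff forall_2)

lemma msmult_entry [simp]: "msmult c A $ i $ j = c * A $ i $ j"
  by (simp add: msmult_def)

lemma mat_entry: "(mat k :: 'a::field mat2) $ i $ j = (if i = j then k else 0)"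
  by (simp add: mat_def)

lemmas mat2_entries = matrix_mult_2_entry trace_2 det_2 mat_entry mat2_eq_iff

lemma msmult_one [simp]: "msmult 1 (A::'a::field mat2) = A"
  by (simp add: mat2_entries)

lemma msmult_zero [simp]: "msmult 0 (A::'a::field mat2) = 0" "msmult c (0::'a::field mat2) = 0"
  by (simp_all add: mat2_entries)

lemma msmult_msmult: "msmult c (msmult d (A::'a::field mat2)) = msmult (c * d) A"
  by (simp add: mat2_entries)

lemma msmult_diff_left: "msmult (a - b) (A::'a::field mat2) = msmult a A - msmult b A"
  unfolding mat2_eq_iff by (simp add: mat2_entries algebra_simps)

lemma msmult_diff_right: "msmult c ((A::'a::field mat2) - B) = msmult c A - msmult c B"
  unfolding mat2_eq_iff by (simp add: mat2_entries algebra_simps)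

lemma matrix_mult_msmult_left: "msmult c (A::'a::field mat2) ** (B::'a mat2) = msmult c (A ** B)"
  unfolding mat2_eq_iff by (simp add: mat2_entries algebra_simps)

lemma matrix_mult_msmult_right: "(A::'a::field mat2) ** msmult c (B::'a mat2) = msmult c (A ** B)"
  unfolding mat2_eq_iff by (simp add: mat2_entries algebra_simps)

lemma matrix_mult_diff_left: "(A::'a::field mat2) ** (B - C :: 'a mat2) = A ** B - A ** C"
  unfolding mat2_eq_iff by (simp add: mat2_entries algebra_simps)

lemma matrix_mult_diff_right: "((A::'a::field mat2) - B) ** (C::'a mat2) = A ** C - B ** C"
  unfolding mat2_eq_iff by (simp add: mat2_entries algebra_simps)

lemma matrix_mult_add_right: "((A::'a::field mat2) + B) ** (C::'a mat2) = A ** C + B ** C"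
  unfolding mat2_eq_iff by (simp add: mat2_entries algebra_simps)

lemma trace_msmult: "trace (msmult c (A::'a::field mat2)) = c * trace A"
  by (simp add: mat2_entries algebra_simps)

lemma det_msmult: "det (msmult c (A::'a::field mat2)) = c\<^sup>2 * det A"
  by (simp add: mat2_entries algebra_simps power2_eq_square)

lemma trace_mat1_2: "trace (mat 1 :: 'a::field mat2) = 2"
  by (simp add: mat2_entries)

lemma mat1_neq_zero_2: "(mat 1 :: 'a::field mat2) \<noteq> 0"
  by (simp add: mat2_entries)

lemma mat2_cayley_hamilton:
  "(x::'a::field mat2) ** x = msmult (trace x) x - msmult (det x) (mat 1)"
  unfolding mat2_eq_iff by (simp add: mat2_entries algebra_simps)

lemma mat2_anticommutator:
  "(u::'a::field mat2) ** (v::'a mat2) + v ** u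
     = msmult (trace u) v + msmult (trace v) u + msmult (trace (u ** v) - trace u * trace v) (mat 1)"
  unfolding mat2_eq_iff by (simp add: mat2_entries algebra_simps)

lemma det_add_msmult:
  "det ((u::'a::field mat2) + msmult t (v::'a mat2))
     = det u + t * (trace u * trace v - trace (u ** v)) + t\<^sup>2 * det v"
  unfolding mat2_eq_iff by (simp add: mat2_entries algebra_simps power2_eq_square)

lemma subspace2_zero: "is_subspace2 M \<Longrightarrow> 0 \<in> M"
  by (simp add: is_subspace2_def)

lemma subspace2_add: "is_subspace2 M \<Longrightarrow> x \<in> M \<Longrightarrow> y \<in> M \<Longrightarrow> x + y \<in> M"
  by (simp add: is_subspace2_def)

lemma subspace2_msmult: "is_subspace2 M \<Longrightarrow> x \<in> M \<Longrightarrow> msmult c x \<in> M"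
  by (simp add: is_subspace2_def)

lemma subspace2_diff:
  assumes "is_subspace2 (M::'a::field mat2 set)" "x \<in> M" "y \<in> M"
  shows "x - y \<in> M"
proof -
  have "x - y = x + msmult (-1) y" by (simp add: mat2_entries)
  with assms show ?thesis by (metis subspace2_add subspace2_msmult)
qed

lemma subspace2_traceless_part:
  assumes "is_subspace2 (M::'a::field mat2 set)" "u \<in> M" "trace u \<noteq> 0" "m \<in> M"
  shows "m - msmult (trace m / trace u) u \<in> M" "trace (m - msmult (trace m / trace u) u) = 0"
  using assms by (simp_all add: subspace2_diff subspace2_msmult trace_sub trace_msmult)

lemma alg_closed_quadratic_root:
  fixes c0 c1 c2 :: "'a::alg_closed_field"
  assumes "c1 \<noteq> 0 \<or> c2 \<noteq> 0"
  shows "\<exists>x. c0 + c1 * x + c2 * x\<^sup>2 = 0"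
proof (cases "c2 = 0")
  case True
  with assms show ?thesis by (intro exI[of _ "- c0 / c1"]) (simp add: field_simps)
next
  case False
  define f where "f = (\<lambda>k::nat. if k = 0 then c0 else if k = 1 then c1 else c2)"
  have "\<exists>x. (\<Sum>k\<le>2. f k * x ^ k) = 0" using False by (intro alg_closed) (auto simp: f_def)
  then show ?thesis by (simp add: f_def numeral_2_eq_2 power2_eq_square algebra_simps)
qed

lemma mat2_eigenvalues_exist:
  fixes u :: "'a::alg_closed_field mat2"
  obtains \<alpha> \<beta> where "\<alpha> + \<beta> = trace u" "\<alpha> * \<beta> = det u"
proof -
  obtain \<alpha> where \<alpha>: "det u + (- trace u) * \<alpha> + 1 * \<alpha>\<^sup>2 = 0"
    using alg_closed_quadratic_root[of "- trace u" 1 "det u"] by auto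
  have "\<alpha> * (trace u - \<alpha>) = det u"
    using \<alpha> by (simp add: algebra_simps power2_eq_square)
  then show thesis by (intro that[of \<alpha> "trace u - \<alpha>"]) simp_all
qed

lemma idempotent2_cases:
  fixes z :: "'a::field mat2"
  assumes "idempotent2 z"
  shows "z = 0 \<or> z = mat 1 \<or> (trace z = 1 \<and> det z = 0)"
proof -
  obtain a b c d where abcd: "a = z$1$1" "b = z$1$2" "c = z$2$1" "d = z$2$2" by blast
  have e: "a*a + b*c = a" "a*b + b*d = b" "c*a + d*c = c" "c*b + d*d = d"
    using assms unfolding idempotent2_def by (simp_all add: mat2_entries abcd)
  show ?thesis
  proof (cases "a + d = 1")
    case True
    have "a*d - b*c = a*(a + d - 1) - (a*a + b*c - a)" by (simp add: algebra_simps)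
    with e True have "a*d - b*c = 0" by simp
    with True show ?thesis by (simp add: mat2_entries abcd)
  next
    case False
    have "b * (a + d - 1) = (a*b + b*d) - b" "c * (a + d - 1) = (c*a + d*c) - c"
      by (simp_all add: algebra_simps)
    with e have "b * (a + d - 1) = 0" "c * (a + d - 1) = 0" by simp_all
    with False have bc: "b = 0" "c = 0" by auto
    have "a * (a - 1) = (a*a + b*c) - a" "d * (d - 1) = (c*b + d*d) - d"
      using bc by (simp_all add: algebra_simps)
    with e have "a * (a - 1) = 0" "d * (d - 1) = 0" by simp_all
    with False have "(a = 0 \<and> d = 0) \<or> (a = 1 \<and> d = 1)" by auto
    with bc show ?thesis by (auto simp: mat2_entries abcd)
  qed
qed

section \<open>Mathieu subspaces and idempotent-free subspaces\<close>

definition idempotent_free :: "'a::field mat2 set \<Rightarrow> bool" where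
  "idempotent_free M \<longleftrightarrow> (\<forall>x\<in>M. idempotent2 x \<longrightarrow> x = 0)"

lemma idempotent_freeI:
  fixes M :: "'a::field mat2 set"
  assumes "mat 1 \<notin> M" and "\<And>z. z \<in> M \<Longrightarrow> trace z = 1 \<Longrightarrow> det z = 0 \<Longrightarrow> False"
  shows "idempotent_free M"
  using assms idempotent2_cases unfolding idempotent_free_def by blast

lemma idempotent_free_mat1:
  "idempotent_free (M::'a::field mat2 set) \<Longrightarrow> mat 1 \<notin> M"
  using mat1_neq_zero_2 by (auto simp: idempotent_free_def idempotent2_def)

lemma idempotent2_msmult_inverse:
  fixes w :: "'a::field mat2"
  assumes "w ** w = msmult k w" "k \<noteq> 0"
  shows "idempotent2 (msmult (1/k) w)"
  using assms unfolding idempotent2_def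
  by (simp add: matrix_mult_msmult_left matrix_mult_msmult_right msmult_msmult power2_eq_square)

lemma idempotent_free_scaled_idempotent:
  fixes M :: "'a::field mat2 set"
  assumes sub: "is_subspace2 M" and free: "idempotent_free M"
    and "w \<in> M" and ww: "w ** w = msmult k w" and "k \<noteq> 0"
  shows "w = 0"
proof -
  have "idempotent2 (msmult (1/k) w)" using ww \<open>k \<noteq> 0\<close> by (rule idempotent2_msmult_inverse)
  moreover have "msmult (1/k) w \<in> M" using sub \<open>w \<in> M\<close> by (rule subspace2_msmult)
  ultimately have "msmult (1/k) w = 0" using free unfolding idempotent_free_def by blast
  then have "msmult k (msmult (1/k) w) = 0" by simp
  with \<open>k \<noteq> 0\<close> show "w = 0" by (simp add: msmult_msmult)
qed

lemma idempotent_free_scalar: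
  fixes M :: "'a::field mat2 set"
  assumes sub: "is_subspace2 M" and free: "idempotent_free M" and "msmult k (mat 1) \<in> M"
  shows "k = 0"
proof (rule ccontr)
  assume "k \<noteq> 0"
  then have "mat 1 = msmult (1/k) (msmult k (mat 1 :: 'a mat2))" by (simp add: msmult_msmult)
  also have "\<dots> \<in> M" using sub assms(3) by (rule subspace2_msmult)
  finally show False using idempotent_free_mat1[OF free] by blast
qed

lemma idempotent_free_det_nonzero:
  fixes M :: "'a::field mat2 set"
  assumes sub: "is_subspace2 M" and free: "idempotent_free M" and "x \<in> M" and "trace x \<noteq> 0"
  shows "det x \<noteq> 0"
proof
  assume "det x = 0"
  then have "x ** x = msmult (trace x) x" using mat2_cayley_hamilton[of x] by simp
  with assms have "x = 0" by (blast intro: idempotent_free_scaled_idempotent)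
  with \<open>trace x \<noteq> 0\<close> show False by (simp add: mat2_entries)
qed

text \<open>If \<open>a\<^sup>2 \<noteq> 0\<close>, the eigenvalues of \<open>a\<close> produce inside \<open>span {a, a\<^sup>2}\<close> either a nonzero scalar
  matrix or a matrix of nonzero trace and zero determinant.\<close>
lemma idempotent_free_square_zero:
  fixes M :: "'a::alg_closed_field mat2 set"
  assumes sub: "is_subspace2 M" and free: "idempotent_free M" and aM: "a \<in> M" and a2M: "a ** a \<in> M"
  shows "a ** a = 0"
proof -
  obtain \<alpha> \<beta> where eig: "\<alpha> + \<beta> = trace a" "\<alpha> * \<beta> = det a"
    by (rule mat2_eigenvalues_exist)
  have CH: "a ** a = msmult (\<alpha> + \<beta>) a - msmult (\<alpha> * \<beta>) (mat 1)"
    using mat2_cayley_hamilton[of a] eig by simp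
  have simple_eigenvalue: False if "\<gamma> \<noteq> 0" "\<gamma> \<noteq> \<delta>" "\<gamma> + \<delta> = trace a" "\<gamma> * \<delta> = det a" for \<gamma> \<delta>
  proof -
    define x where "x = a ** a - msmult \<delta> a"
    have "x \<in> M" unfolding x_def using sub aM a2M by (intro subspace2_diff subspace2_msmult)
    moreover have "trace x = \<gamma> * (\<gamma> - \<delta>)" "det x = 0"
      using that(3,4) unfolding x_def by (simp_all add: mat2_entries) algebra+
    ultimately show False
      using idempotent_free_det_nonzero[OF sub free] that(1,2) by auto
  qed
  show ?thesis
  proof (cases "\<alpha> = \<beta>")
    case True
    have "msmult (- \<alpha>\<^sup>2) (mat 1) = a ** a - msmult (2 * \<alpha>) a"
      unfolding CH True mat2_eq_iff by (simp add: mat2_entries power2_eq_square algebra_simps)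
    also have "\<dots> \<in> M" using sub aM a2M by (intro subspace2_diff subspace2_msmult)
    finally have "- \<alpha>\<^sup>2 = 0" by (rule idempotent_free_scalar[OF sub free])
    then have "\<alpha> = 0" by simp
    with True show ?thesis unfolding CH by simp
  next
    case False
    then show ?thesis
      using simple_eigenvalue[of \<alpha> \<beta>] simple_eigenvalue[of \<beta> \<alpha>] eig by (auto simp: ac_simps)
  qed
qed

lemma mpow_idempotent: "idempotent2 e \<Longrightarrow> mpow e (Suc n) = e"
  by (induction n) (auto simp: idempotent2_def)

lemma mpow_square_zero: "(a::'a::field mat2) ** a = 0 \<Longrightarrow> mpow a (Suc (Suc n)) = 0"
  by (induction n) (simp_all add: matrix_mul_assoc)

definition matrix_unit2 :: "2 \<Rightarrow> 2 \<Rightarrow> 'a::field mat2" where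
  "matrix_unit2 k l = (\<chi> i j. if i = k \<and> j = l then 1 else 0)"

lemma matrix_unit2_entry [simp]: "matrix_unit2 k l $ i $ j = (if i = k \<and> j = l then 1 else 0)"
  by (simp add: matrix_unit2_def)

lemma matrix_unit2_mult_left:
  "(matrix_unit2 k i ** (e::'a::field mat2)) $ a $ b = (if a = k then e$i$b else 0)"
  using exhaust_2[of i] by (cases "a = k") (auto simp: matrix_mult_2_entry)

lemma matrix_unit2_mult_right:
  "((e::'a::field mat2) ** matrix_unit2 j l) $ a $ b = (if b = l then e$a$j else 0)"
  using exhaust_2[of j] by (cases "b = l") (auto simp: matrix_mult_2_entry)

lemma matrix_unit2_sandwich:
  "matrix_unit2 k i ** (e::'a::field mat2) ** matrix_unit2 j l = msmult (e$i$j) (matrix_unit2 k l)"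
  unfolding vec_eq_iff by (auto simp: matrix_unit2_mult_left matrix_unit2_mult_right)

lemma matrix_unit2_between:
  "((A::'a::field mat2) ** matrix_unit2 k l ** (B::'a mat2)) $ i $ j = A$i$k * B$l$j"
proof -
  have "((A ** matrix_unit2 k l) ** B) $ i $ j
      = (A ** matrix_unit2 k l)$i$1 * B$1$j + (A ** matrix_unit2 k l)$i$2 * B$2$j"
    by (rule matrix_mult_2_entry)
  also have "\<dots> = A$i$k * B$l$j" using exhaust_2[of l] by (auto simp: matrix_unit2_mult_right)
  finally show ?thesis .
qed

lemma mat2_matrix_unit_expansion:
  "(x::'a::field mat2) = msmult (x$1$1) (matrix_unit2 1 1) + msmult (x$1$2) (matrix_unit2 1 2)
     + msmult (x$2$1) (matrix_unit2 2 1) + msmult (x$2$2) (matrix_unit2 2 2)"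
  by (simp add: mat2_entries)

lemma sandwich_nonzero:
  fixes e1 e2 :: "'a::field mat2"
  assumes "e1 \<noteq> 0" "e2 \<noteq> 0"
  obtains x where "e1 ** x ** e2 \<noteq> 0"
proof -
  obtain i k where "e1$i$k \<noteq> 0" using assms(1) by (auto simp: vec_eq_iff)
  moreover obtain l j where "e2$l$j \<noteq> 0" using assms(2) by (auto simp: vec_eq_iff)
  ultimately have "(e1 ** matrix_unit2 k l ** e2)$i$j \<noteq> 0" by (simp add: matrix_unit2_between)
  then have "e1 ** matrix_unit2 k l ** e2 \<noteq> 0" by auto
  then show thesis by (rule that)
qed

lemma mathieu_subspace2_idempotent_UNIV:
  fixes M :: "'a::field mat2 set"
  assumes ms: "mathieu_subspace2 M" and "e \<in> M" "idempotent2 e" "e \<noteq> 0"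
  shows "M = UNIV"
proof -
  have sub: "is_subspace2 M" using ms by (simp add: mathieu_subspace2_def)
  have "\<forall>m\<ge>1. mpow e m \<in> M"
    using \<open>e \<in> M\<close> mpow_idempotent[OF \<open>idempotent2 e\<close>] by (metis One_nat_def Suc_le_D)
  then have sandwich: "b ** e ** c \<in> M" for b c
    using ms mpow_idempotent[OF \<open>idempotent2 e\<close>] unfolding mathieu_subspace2_def
    by (metis le_SucI order_refl)
  obtain i j where ij: "e$i$j \<noteq> 0" using \<open>e \<noteq> 0\<close> by (auto simp: vec_eq_iff)
  have units: "matrix_unit2 k l \<in> M" for k l
  proof -
    have "matrix_unit2 k l = msmult (1 / e$i$j) (matrix_unit2 k i ** e ** matrix_unit2 j l)"
      using ij by (simp add: matrix_unit2_sandwich msmult_msmult)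
    then show ?thesis using sandwich subspace2_msmult[OF sub] by metis
  qed
  have "x \<in> M" for x
    by (subst mat2_matrix_unit_expansion)
      (intro subspace2_add[OF sub] subspace2_msmult[OF sub] units)
  then show ?thesis by blast
qed

lemma idempotent_free_mathieu_subspace2:
  fixes M :: "'a::alg_closed_field mat2 set"
  assumes sub: "is_subspace2 M" and free: "idempotent_free M"
  shows "mathieu_subspace2 M"
  unfolding mathieu_subspace2_def
proof (intro conjI sub allI impI)
  fix a b c :: "'a mat2"
  assume powers: "\<forall>m\<ge>1. mpow a m \<in> M"
  have "mpow a 1 \<in> M" "mpow a 2 \<in> M"
    using powers[rule_format, OF order_refl] powers[rule_format, OF one_le_numeral] .
  then have "a \<in> M" "a ** a \<in> M" by (simp_all add: numeral_2_eq_2)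
  then have "a ** a = 0" by (rule idempotent_free_square_zero[OF sub free])
  have "b ** mpow a m ** c \<in> M" if "m \<ge> 2" for m
  proof -
    from that have "m = Suc (Suc (m - 2))" by simp
    then obtain n where "m = Suc (Suc n)" by blast
    then show ?thesis using mpow_square_zero[OF \<open>a ** a = 0\<close>] subspace2_zero[OF sub] by simp
  qed
  then show "\<exists>N. \<forall>m\<ge>N. b ** mpow a m ** c \<in> M" by blast
qed

lemma maximal_mathieu_subspace2_iff:
  fixes M :: "'a::alg_closed_field mat2 set"
  shows "maximal_mathieu_subspace2 M \<longleftrightarrow> is_subspace2 M \<and> idempotent_free M \<and>
     (\<forall>M'. is_subspace2 M' \<and> idempotent_free M' \<and> M \<subseteq> M' \<longrightarrow> M' = M)"
proof -
  have "mathieu_subspace2 N \<and> N \<noteq> UNIV \<longleftrightarrow> is_subspace2 N \<and> idempotent_free N"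
    for N :: "'a mat2 set"
  proof
    assume "mathieu_subspace2 N \<and> N \<noteq> UNIV"
    then show "is_subspace2 N \<and> idempotent_free N"
      using mathieu_subspace2_idempotent_UNIV[of N]
      unfolding idempotent_free_def by (auto simp: mathieu_subspace2_def)
  next
    assume "is_subspace2 N \<and> idempotent_free N"
    then show "mathieu_subspace2 N \<and> N \<noteq> UNIV"
      using idempotent_free_mathieu_subspace2 idempotent_free_mat1 by blast
  qed
  then show ?thesis unfolding maximal_mathieu_subspace2_def by blast
qed

section \<open>Traceless elements of an idempotent-free subspace\<close>

lemma idempotent_free_traceless:
  fixes M :: "'a::alg_closed_field mat2 set"
  assumes sub: "is_subspace2 M" and free: "idempotent_free M"
    and "u \<in> M" "trace u \<noteq> 0" "v \<in> M" "trace v = 0"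
  shows "trace (u ** v) = 0 \<and> det v = 0"
proof (rule ccontr)
  assume "\<not> (trace (u ** v) = 0 \<and> det v = 0)"
  then have "- trace (u ** v) \<noteq> 0 \<or> det v \<noteq> 0" by simp
  then obtain t where t: "det u + (- trace (u ** v)) * t + det v * t\<^sup>2 = 0"
    using alg_closed_quadratic_root[of "- trace (u ** v)" "det v" "det u"] by blast
  have "u + msmult t v \<in> M" using sub assms(3,5) by (intro subspace2_add subspace2_msmult)
  moreover have "trace (u + msmult t v) \<noteq> 0" using assms(4,6) by (simp add: trace_add trace_msmult)
  moreover have "det (u + msmult t v) = det u + (- trace (u ** v)) * t + det v * t\<^sup>2"
    using assms(6) by (simp add: det_add_msmult algebra_simps)
  then have "det (u + msmult t v) = 0" using t by simp
  ultimately show False using idempotent_free_det_nonzero[OF sub free] by blast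
qed

lemma mat2_entry_products_zero:
  fixes A B :: "'a::field mat2"
  assumes "\<And>i j k l. A$i$j * B$k$l = 0"
  shows "A = 0 \<or> B = 0"
proof (rule ccontr)
  assume "\<not> (A = 0 \<or> B = 0)"
  then obtain i j k l where "A$i$j \<noteq> 0" "B$k$l \<noteq> 0" by (auto simp: vec_eq_iff)
  with assms[of i j k l] show False by simp
qed

lemma mat2_proportional:
  fixes A B :: "'a::field mat2"
  assumes "A \<noteq> 0" and minors: "\<And>i j k l. A$i$j * B$k$l = A$k$l * B$i$j"
  obtains s where "B = msmult s A"
proof -
  obtain i j where ij: "A$i$j \<noteq> 0" using \<open>A \<noteq> 0\<close> by (auto simp: vec_eq_iff)
  define s where "s = B$i$j / A$i$j"
  have "B$k$l = s * A$k$l" for k l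
  proof -
    have "B$k$l * A$i$j = B$i$j * A$k$l"
      using minors[of i j k l] by (simp only: mult.commute[of "B$k$l"] mult.commute[of "B$i$j"])
    with ij show ?thesis unfolding s_def by (simp add: field_simps)
  qed
  then have "B = msmult s A" by (simp add: vec_eq_iff)
  then show thesis by (rule that)
qed

text \<open>Both lemmas below are the vanishing of explicit polynomials in the entries: the hypotheses
  make every displayed product (resp. square of a \<open>2\<times>2\<close> minor) lie in the ideal they generate.\<close>
lemma traceless_square_zero_eigen_dichotomy:
  fixes u v :: "'a::field mat2"
  assumes "trace v = 0" "det v = 0" "trace (u ** v) = 0" "\<alpha> + \<beta> = trace u" "\<alpha> * \<beta> = det u"
  shows "u ** v = msmult \<alpha> v \<or> u ** v = msmult \<beta> v"
proof -
  have "\<forall>i j k l. (u ** v - msmult \<alpha> v)$i$j * (u ** v - msmult \<beta> v)$k$l = 0"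
    using assms unfolding forall_2 trace_2 det_2 matrix_mult_2_entry
      vector_minus_component msmult_entry
    apply (intro conjI)
    apply ((simp; fail) | algebra)+
    done
  then have "u ** v - msmult \<alpha> v = 0 \<or> u ** v - msmult \<beta> v = 0"
    by (intro mat2_entry_products_zero) blast
  then show ?thesis by simp
qed

lemma traceless_square_zero_proportional:
  fixes N v :: "'a::field mat2"
  assumes "trace N = 0" "det N = 0" "trace v = 0" "det v = 0" "trace (N ** v) = 0" "N \<noteq> 0"
  obtains s where "v = msmult s N"
proof -
  have "\<forall>i j k l. (N$i$j * v$k$l - N$k$l * v$i$j)\<^sup>2 = 0"
    using assms(1-5) unfolding forall_2 trace_2 det_2 matrix_mult_2_entry
    apply (intro conjI)
    apply ((simp; fail) | algebra)+
    done
  then have "N$i$j * v$k$l = N$k$l * v$i$j" for i j k l by simp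
  with \<open>N \<noteq> 0\<close> show thesis by (rule mat2_proportional) (rule that)
qed

lemma subset_Un_subgroup_cases:
  fixes S A B :: "'a::ab_group_add set"
  assumes "\<And>x y. x \<in> S \<Longrightarrow> y \<in> S \<Longrightarrow> x + y \<in> S"
    and "\<And>x y. x \<in> A \<Longrightarrow> y \<in> A \<Longrightarrow> x - y \<in> A"
    and "\<And>x y. x \<in> B \<Longrightarrow> y \<in> B \<Longrightarrow> x - y \<in> B"
    and "S \<subseteq> A \<union> B"
  shows "S \<subseteq> A \<or> S \<subseteq> B"
proof (rule ccontr)
  assume "\<not> (S \<subseteq> A \<or> S \<subseteq> B)"
  then obtain x y where x: "x \<in> S" "x \<notin> A" and y: "y \<in> S" "y \<notin> B" by blast
  with assms(4) have "x \<in> B" "y \<in> A" by blast+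
  from x(1) y(1) have "x + y \<in> A \<union> B" using assms(1,4) by blast
  then show False
  proof
    assume "x + y \<in> A"
    from this \<open>y \<in> A\<close> have "(x + y) - y \<in> A" by (rule assms(2))
    with x(2) show False by simp
  next
    assume "x + y \<in> B"
    from this \<open>x \<in> B\<close> have "(x + y) - x \<in> B" by (rule assms(3))
    with y(2) show False by simp
  qed
qed

definition spectral_corner :: "'a::field mat2 \<Rightarrow> 'a \<Rightarrow> 'a \<Rightarrow> 'a mat2 \<Rightarrow> bool" where
  "spectral_corner u \<alpha> \<beta> v \<longleftrightarrow> u ** v = msmult \<alpha> v \<and> v ** u = msmult \<beta> v"

lemma spectral_corner_diff:
  "spectral_corner u \<alpha> \<beta> a \<Longrightarrow> spectral_corner u \<alpha> \<beta> b \<Longrightarrow> spectral_corner u \<alpha> \<beta> (a - b)"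
  unfolding spectral_corner_def
  by (simp add: matrix_mult_diff_left matrix_mult_diff_right msmult_diff_right)

lemma traceless_square_zero_spectral_corner:
  fixes u v :: "'a::field mat2"
  assumes "trace v = 0" "det v = 0" "trace (u ** v) = 0" "\<alpha> + \<beta> = trace u" "\<alpha> * \<beta> = det u"
  shows "spectral_corner u \<alpha> \<beta> v \<or> spectral_corner u \<beta> \<alpha> v"
proof -
  have "u ** v + v ** u = msmult (\<alpha> + \<beta>) v"
    using mat2_anticommutator[of u v] assms(1,3,4) by simp
  then have vu: "v ** u = msmult (\<alpha> + \<beta>) v - u ** v" by (metis add_diff_cancel_left')
  from traceless_square_zero_eigen_dichotomy[OF assms] show ?thesis
  proof
    assume "u ** v = msmult \<alpha> v"
    with vu have "v ** u = msmult \<beta> v" by (simp flip: msmult_diff_left)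
    with \<open>u ** v = msmult \<alpha> v\<close> show ?thesis by (simp add: spectral_corner_def)
  next
    assume "u ** v = msmult \<beta> v"
    with vu have "v ** u = msmult \<alpha> v" by (simp flip: msmult_diff_left)
    with \<open>u ** v = msmult \<beta> v\<close> show ?thesis by (simp add: spectral_corner_def)
  qed
qed

text \<open>The traceless elements of \<open>M\<close> all lie in one Peirce corner of the eigenvalue decomposition
  of \<open>u\<close>: each lies in one of two subgroups, and a group covered by two subgroups lies in one.\<close>
lemma idempotent_free_spectral_corner:
  fixes M :: "'a::alg_closed_field mat2 set"
  assumes sub: "is_subspace2 M" and free: "idempotent_free M" and "u \<in> M" "trace u \<noteq> 0"
    and eig: "\<alpha> + \<beta> = trace u" "\<alpha> * \<beta> = det u"
  shows "(\<forall>v\<in>M. trace v = 0 \<longrightarrow> spectral_corner u \<alpha> \<beta> v)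
    \<or> (\<forall>v\<in>M. trace v = 0 \<longrightarrow> spectral_corner u \<beta> \<alpha> v)"
proof -
  let ?S = "{v \<in> M. trace v = 0}"
  have "?S \<subseteq> Collect (spectral_corner u \<alpha> \<beta>) \<union> Collect (spectral_corner u \<beta> \<alpha>)"
    using idempotent_free_traceless[OF sub free \<open>u \<in> M\<close> \<open>trace u \<noteq> 0\<close>]
      traceless_square_zero_spectral_corner eig by blast
  then have "?S \<subseteq> Collect (spectral_corner u \<alpha> \<beta>) \<or> ?S \<subseteq> Collect (spectral_corner u \<beta> \<alpha>)"
    by (intro subset_Un_subgroup_cases)
      (auto simp: subspace2_add[OF sub] spectral_corner_diff trace_add)
  then show ?thesis by blast
qed

section \<open>Spectral idempotents\<close>

definition spectral_proj :: "'a::field mat2 \<Rightarrow> 'a \<Rightarrow> 'a \<Rightarrow> 'a mat2" where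
  "spectral_proj u \<alpha> \<beta> = msmult (1 / (\<alpha> - \<beta>)) (u - msmult \<beta> (mat 1))"

lemma spectral_proj_swap:
  "spectral_proj (u::'a::field mat2) \<beta> \<alpha> = msmult (1 / (\<alpha> - \<beta>)) (msmult \<alpha> (mat 1) - u)"
proof -
  have "1 / (\<beta> - \<alpha>) = - (1 / (\<alpha> - \<beta>))" by (metis minus_diff_eq divide_minus_right)
  then show ?thesis unfolding spectral_proj_def mat2_eq_iff by (simp add: algebra_simps)
qed

lemma spectral_proj_sum:
  fixes u :: "'a::field mat2"
  assumes "\<alpha> \<noteq> \<beta>"
  shows "spectral_proj u \<alpha> \<beta> + spectral_proj u \<beta> \<alpha> = mat 1"
proof -
  define k where "k = 1 / (\<alpha> - \<beta>)"
  have "k * (\<alpha> - \<beta>) = 1" using assms by (simp add: k_def)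
  then show ?thesis
    unfolding spectral_proj_swap[where \<alpha> = \<alpha> and \<beta> = \<beta>]
    unfolding spectral_proj_def k_def[symmetric] mat2_eq_iff
    by (simp add: mat_entry algebra_simps)
qed

lemma spectral_decomposition:
  fixes u :: "'a::field mat2"
  assumes "\<alpha> \<noteq> \<beta>"
  shows "msmult \<alpha> (spectral_proj u \<alpha> \<beta>) + msmult \<beta> (spectral_proj u \<beta> \<alpha>) = u"
proof -
  define k where "k = 1 / (\<alpha> - \<beta>)"
  have "k * (\<alpha> - \<beta>) = 1" using assms by (simp add: k_def)
  then show ?thesis
    unfolding spectral_proj_swap[where \<alpha> = \<alpha> and \<beta> = \<beta>]
    unfolding spectral_proj_def k_def[symmetric] mat2_eq_iff
    apply (simp add: mat_entry)
    apply (intro conjI)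
    apply algebra+
    done
qed

lemma trace_spectral_proj:
  fixes u :: "'a::field mat2"
  assumes "\<alpha> \<noteq> \<beta>" "\<alpha> + \<beta> = trace u"
  shows "trace (spectral_proj u \<alpha> \<beta>) = 1"
proof -
  have "trace (spectral_proj u \<alpha> \<beta>) = (trace u - 2 * \<beta>) / (\<alpha> - \<beta>)"
    by (simp add: spectral_proj_def trace_msmult trace_sub trace_mat1_2)
  moreover have "trace u - 2 * \<beta> = \<alpha> - \<beta>"
    by (simp add: algebra_simps mult_2 flip: assms(2))
  ultimately show ?thesis using assms(1) by simp
qed

lemma spectral_proj_idempotent:
  fixes u :: "'a::field mat2"
  assumes "\<alpha> \<noteq> \<beta>" "\<alpha> + \<beta> = trace u" "\<alpha> * \<beta> = det u"
  shows "idempotent2 (spectral_proj u \<alpha> \<beta>)"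
proof -
  let ?w = "u - msmult \<beta> (mat 1)"
  have "?w ** ?w = msmult (\<alpha> - \<beta>) ?w"
    using assms(2,3) unfolding mat2_eq_iff trace_2 det_2
    apply (simp add: matrix_mult_2_entry mat_entry)
    apply (intro conjI)
    apply ((simp add: algebra_simps; fail) | algebra)+
    done
  with assms(1) show ?thesis
    unfolding spectral_proj_def by (intro idempotent2_msmult_inverse) simp_all
qed

lemma spectral_corner_sandwich:
  fixes u v :: "'a::field mat2"
  assumes "spectral_corner u \<alpha> \<beta> v" "\<alpha> \<noteq> \<beta>"
  shows "spectral_proj u \<alpha> \<beta> ** v ** spectral_proj u \<beta> \<alpha> = v"
proof -
  have uv: "u ** v = msmult \<alpha> v" and vu: "v ** u = msmult \<beta> v"
    using assms(1) by (auto simp: spectral_corner_def)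
  have "\<alpha> - \<beta> \<noteq> 0" "\<beta> - \<alpha> \<noteq> 0" using assms(2) by simp_all
  have "spectral_proj u \<alpha> \<beta> ** v = msmult (1 / (\<alpha> - \<beta>)) (u ** v - msmult \<beta> v)"
    unfolding spectral_proj_def by (simp add: matrix_mult_msmult_left matrix_mult_diff_right)
  also have "\<dots> = v" unfolding uv mat2_eq_iff using \<open>\<alpha> - \<beta> \<noteq> 0\<close> by (simp add: field_simps)
  finally have left: "spectral_proj u \<alpha> \<beta> ** v = v" .
  have "v ** spectral_proj u \<beta> \<alpha> = msmult (1 / (\<beta> - \<alpha>)) (v ** u - msmult \<alpha> v)"
    unfolding spectral_proj_def by (simp add: matrix_mult_msmult_right matrix_mult_diff_left)
  also have "\<dots> = v" unfolding vu mat2_eq_iff using \<open>\<beta> - \<alpha> \<noteq> 0\<close> by (simp add: field_simps)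
  finally show ?thesis using left by simp
qed

section \<open>Every idempotent-free subspace lies in a model subspace\<close>

definition traceless_space :: "'a::field mat2 set" where
  "traceless_space = {b. trace b = 0}"

definition corner_data :: "'a::field mat2 \<Rightarrow> 'a mat2 \<Rightarrow> 'a \<Rightarrow> 'a \<Rightarrow> bool" where
  "corner_data e1 e2 l1 l2 \<longleftrightarrow> idempotent2 e1 \<and> idempotent2 e2 \<and> e1 \<noteq> 0 \<and> e2 \<noteq> 0 \<and>
     e1 + e2 = mat 1 \<and> l1 \<noteq> l2 \<and> l1 \<noteq> 0 \<and> l2 \<noteq> 0 \<and> l1 + l2 \<noteq> 0"

definition corner_space :: "'a::field mat2 \<Rightarrow> 'a mat2 \<Rightarrow> 'a \<Rightarrow> 'a \<Rightarrow> 'a mat2 set" where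
  "corner_space e1 e2 l1 l2 = {msmult t (msmult l1 e1 + msmult l2 e2) + e1 ** x ** e2 | t x. True}"

definition unipotent_line :: "'a::field mat2 \<Rightarrow> 'a mat2 set" where
  "unipotent_line c = {msmult t (mat 1 + c) | t. True}"

definition model_subspace2 :: "'a::field mat2 set \<Rightarrow> bool" where
  "model_subspace2 M \<longleftrightarrow> M = traceless_space
     \<or> (\<exists>e1 e2 l1 l2. corner_data e1 e2 l1 l2 \<and> M = corner_space e1 e2 l1 l2)
     \<or> (\<exists>c. c \<noteq> 0 \<and> nilpotent2 c \<and> M = unipotent_line c)"

lemma corner_space_cover:
  fixes M :: "'a::field mat2 set"
  assumes sub: "is_subspace2 M" and "u \<in> M" "trace u \<noteq> 0" "\<alpha> \<noteq> \<beta>"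
    and corner: "\<forall>v\<in>M. trace v = 0 \<longrightarrow> spectral_corner u \<alpha> \<beta> v"
  shows "M \<subseteq> corner_space (spectral_proj u \<alpha> \<beta>) (spectral_proj u \<beta> \<alpha>) \<alpha> \<beta>"
proof
  fix m assume "m \<in> M"
  define t where "t = trace m / trace u"
  define v where "v = m - msmult t u"
  have "v \<in> M" "trace v = 0"
    using subspace2_traceless_part[OF sub \<open>u \<in> M\<close> \<open>trace u \<noteq> 0\<close> \<open>m \<in> M\<close>]
    by (simp_all add: v_def t_def)
  then have "spectral_proj u \<alpha> \<beta> ** v ** spectral_proj u \<beta> \<alpha> = v"
    using corner spectral_corner_sandwich \<open>\<alpha> \<noteq> \<beta>\<close> by blast
  then have "m = msmult t (msmult \<alpha> (spectral_proj u \<alpha> \<beta>) + msmult \<beta> (spectral_proj u \<beta> \<alpha>))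
      + spectral_proj u \<alpha> \<beta> ** v ** spectral_proj u \<beta> \<alpha>"
    using spectral_decomposition[OF \<open>\<alpha> \<noteq> \<beta>\<close>] by (simp add: v_def)
  then show "m \<in> corner_space (spectral_proj u \<alpha> \<beta>) (spectral_proj u \<beta> \<alpha>) \<alpha> \<beta>"
    unfolding corner_space_def by blast
qed

lemma corner_data_spectral_proj:
  fixes u :: "'a::field mat2"
  assumes "\<alpha> \<noteq> \<beta>" "\<alpha> \<noteq> 0" "\<beta> \<noteq> 0" "\<alpha> + \<beta> \<noteq> 0" "\<alpha> + \<beta> = trace u" "\<alpha> * \<beta> = det u"
  shows "corner_data (spectral_proj u \<alpha> \<beta>) (spectral_proj u \<beta> \<alpha>) \<alpha> \<beta>"
proof -
  have swapped: "\<beta> \<noteq> \<alpha>" "\<beta> + \<alpha> = trace u" "\<beta> * \<alpha> = det u"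
    using assms(1,5,6) by (simp_all add: ac_simps)
  have "trace (spectral_proj u \<alpha> \<beta>) = 1" "trace (spectral_proj u \<beta> \<alpha>) = 1"
    using trace_spectral_proj[OF assms(1,5)] trace_spectral_proj[OF swapped(1,2)] by simp_all
  then have "spectral_proj u \<alpha> \<beta> \<noteq> 0" "spectral_proj u \<beta> \<alpha> \<noteq> 0" by (auto simp: trace_2)
  then show ?thesis
    unfolding corner_data_def
    using assms spectral_proj_idempotent[OF assms(1,5,6)] spectral_proj_idempotent[OF swapped]
      spectral_proj_sum[OF assms(1)] by auto
qed

lemma double_eigenvalue_shift:
  fixes u :: "'a::field mat2"
  assumes "\<alpha> + \<alpha> = trace u" "\<alpha> * \<alpha> = det u"
  shows "trace (u - msmult \<alpha> (mat 1)) = 0" "det (u - msmult \<alpha> (mat 1)) = 0"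
proof -
  have "trace (u - msmult \<alpha> (mat 1)) = trace u - (\<alpha> + \<alpha>)"
    by (simp add: trace_sub trace_msmult trace_mat1_2 algebra_simps)
  with assms(1) show "trace (u - msmult \<alpha> (mat 1)) = 0" by simp
  show "det (u - msmult \<alpha> (mat 1)) = 0"
    using assms unfolding trace_2 det_2
    apply (simp add: mat_entry)
    apply algebra
    done
qed

lemma double_eigenvalue_square_zero:
  fixes u :: "'a::field mat2"
  assumes "\<alpha> + \<alpha> = trace u" "\<alpha> * \<alpha> = det u"
  shows "(u - msmult \<alpha> (mat 1)) ** (u - msmult \<alpha> (mat 1)) = 0"
  using mat2_cayley_hamilton[of "u - msmult \<alpha> (mat 1)"] double_eigenvalue_shift[OF assms] by simp

lemma idempotent_free_double_eigenvalue:
  fixes M :: "'a::alg_closed_field mat2 set"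
  assumes sub: "is_subspace2 M" and free: "idempotent_free M" and "u \<in> M" "trace u \<noteq> 0"
    and eig: "\<alpha> + \<alpha> = trace u" "\<alpha> * \<alpha> = det u" and "v \<in> M" "trace v = 0"
  shows "v = 0"
proof (rule ccontr)
  assume "v \<noteq> 0"
  have "trace (u ** v) = 0" "det v = 0"
    using idempotent_free_traceless[OF sub free \<open>u \<in> M\<close> \<open>trace u \<noteq> 0\<close> \<open>v \<in> M\<close> \<open>trace v = 0\<close>]
    by simp_all
  define N where "N = u - msmult \<alpha> (mat 1)"
  have N: "trace N = 0" "det N = 0" unfolding N_def by (rule double_eigenvalue_shift[OF eig])+
  have "trace (N ** v) = 0"
    using \<open>trace (u ** v) = 0\<close> \<open>trace v = 0\<close>
    by (simp add: N_def matrix_mult_diff_right matrix_mult_msmult_left trace_sub trace_msmult)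
  have "N \<noteq> 0"
  proof
    assume "N = 0"
    then have "msmult \<alpha> (mat 1) \<in> M" using \<open>u \<in> M\<close> by (simp add: N_def)
    then have "\<alpha> = 0" by (rule idempotent_free_scalar[OF sub free])
    with eig(1) \<open>trace u \<noteq> 0\<close> show False by simp
  qed
  obtain s where s: "v = msmult s N"
    using traceless_square_zero_proportional[OF N \<open>trace v = 0\<close> \<open>det v = 0\<close>
        \<open>trace (N ** v) = 0\<close> \<open>N \<noteq> 0\<close>] .
  with \<open>v \<noteq> 0\<close> have "s \<noteq> 0" by auto
  with s have "msmult (1/s) v = N" by (simp add: msmult_msmult)
  then have "msmult \<alpha> (mat 1) = u - msmult (1/s) v" by (simp add: N_def)
  also have "\<dots> \<in> M" using sub \<open>u \<in> M\<close> \<open>v \<in> M\<close> by (intro subspace2_diff subspace2_msmult)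
  finally have "\<alpha> = 0" by (rule idempotent_free_scalar[OF sub free])
  with eig(1) \<open>trace u \<noteq> 0\<close> show False by simp
qed

lemma double_eigenvalue_unipotent_part:
  fixes u :: "'a::field mat2"
  assumes "\<alpha> \<noteq> 0" "\<alpha> + \<alpha> = trace u" "\<alpha> * \<alpha> = det u" "u \<noteq> msmult \<alpha> (mat 1)"
  defines "c \<equiv> msmult (1/\<alpha>) (u - msmult \<alpha> (mat 1))"
  shows "c \<noteq> 0" "nilpotent2 c"
proof -
  show "c \<noteq> 0"
  proof
    assume "c = 0"
    then have "msmult \<alpha> c = 0" by simp
    with assms(1) have "u - msmult \<alpha> (mat 1) = 0" by (simp add: c_def msmult_msmult)
    with assms(4) show False by simp
  qed
  have "c ** c = 0"
    using double_eigenvalue_square_zero[OF assms(2,3)]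
    by (simp add: c_def matrix_mult_msmult_left matrix_mult_msmult_right)
  then have "mpow c 2 = 0" by (simp add: numeral_2_eq_2)
  then show "nilpotent2 c" unfolding nilpotent2_def by blast
qed

lemma unipotent_line_cover:
  fixes M :: "'a::alg_closed_field mat2 set"
  assumes sub: "is_subspace2 M" and free: "idempotent_free M" and "u \<in> M" "trace u \<noteq> 0"
    and eig: "\<alpha> + \<alpha> = trace u" "\<alpha> * \<alpha> = det u"
  shows "M \<subseteq> unipotent_line (msmult (1/\<alpha>) (u - msmult \<alpha> (mat 1)))"
proof
  have "\<alpha> \<noteq> 0" using eig(1) \<open>trace u \<noteq> 0\<close> by auto
  then have u: "u = msmult \<alpha> (mat 1 + msmult (1/\<alpha>) (u - msmult \<alpha> (mat 1)))"
    unfolding mat2_eq_iff by (simp add: mat_entry field_simps)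
  fix m assume "m \<in> M"
  define t where "t = trace m / trace u"
  have "m - msmult t u \<in> M" "trace (m - msmult t u) = 0"
    using subspace2_traceless_part[OF sub \<open>u \<in> M\<close> \<open>trace u \<noteq> 0\<close> \<open>m \<in> M\<close>]
    by (simp_all add: t_def)
  then have "m - msmult t u = 0"
    by (rule idempotent_free_double_eigenvalue[OF sub free \<open>u \<in> M\<close> \<open>trace u \<noteq> 0\<close> eig])
  then have "m = msmult (t * \<alpha>) (mat 1 + msmult (1/\<alpha>) (u - msmult \<alpha> (mat 1)))"
    by (subst (asm) u) (simp add: msmult_msmult)
  then show "m \<in> unipotent_line (msmult (1/\<alpha>) (u - msmult \<alpha> (mat 1)))"
    unfolding unipotent_line_def by blast
qed

lemma idempotent_free_subset_corner_space:
  fixes M :: "'a::alg_closed_field mat2 set"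
  assumes sub: "is_subspace2 M" and free: "idempotent_free M" and "u \<in> M" "trace u \<noteq> 0"
    and eig: "\<alpha> + \<beta> = trace u" "\<alpha> * \<beta> = det u" and "\<alpha> \<noteq> \<beta>"
  obtains e1 e2 l1 l2 where "corner_data e1 e2 l1 l2" "M \<subseteq> corner_space e1 e2 l1 l2"
proof -
  note result = that
  have "det u \<noteq> 0" using idempotent_free_det_nonzero[OF sub free \<open>u \<in> M\<close> \<open>trace u \<noteq> 0\<close>] .
  have corner: thesis
    if "\<gamma> \<noteq> \<delta>" "\<gamma> + \<delta> = trace u" "\<gamma> * \<delta> = det u"
      and "\<forall>v\<in>M. trace v = 0 \<longrightarrow> spectral_corner u \<gamma> \<delta> v" for \<gamma> \<delta>
  proof -
    have nonzero: "\<gamma> \<noteq> 0" "\<delta> \<noteq> 0" "\<gamma> + \<delta> \<noteq> 0"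
      using that(2,3) \<open>det u \<noteq> 0\<close> \<open>trace u \<noteq> 0\<close> by auto
    have "corner_data (spectral_proj u \<gamma> \<delta>) (spectral_proj u \<delta> \<gamma>) \<gamma> \<delta>"
      by (rule corner_data_spectral_proj[OF that(1) nonzero that(2,3)])
    then show thesis
      by (rule result) (rule corner_space_cover[OF sub \<open>u \<in> M\<close> \<open>trace u \<noteq> 0\<close> that(1,4)])
  qed
  have "\<beta> \<noteq> \<alpha>" "\<beta> + \<alpha> = trace u" "\<beta> * \<alpha> = det u" using \<open>\<alpha> \<noteq> \<beta>\<close> eig by (simp_all add: ac_simps)
  with idempotent_free_spectral_corner[OF sub free \<open>u \<in> M\<close> \<open>trace u \<noteq> 0\<close> eig] show thesis
    using corner[OF \<open>\<alpha> \<noteq> \<beta>\<close> eig] corner[of \<beta> \<alpha>] by blast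
qed

lemma idempotent_free_subset_unipotent_line:
  fixes M :: "'a::alg_closed_field mat2 set"
  assumes sub: "is_subspace2 M" and free: "idempotent_free M" and "u \<in> M" "trace u \<noteq> 0"
    and eig: "\<alpha> + \<alpha> = trace u" "\<alpha> * \<alpha> = det u"
  obtains c where "c \<noteq> 0" "nilpotent2 c" "M \<subseteq> unipotent_line c"
proof -
  have "\<alpha> \<noteq> 0" using eig(1) \<open>trace u \<noteq> 0\<close> by auto
  moreover have "u \<noteq> msmult \<alpha> (mat 1)"
    using idempotent_free_scalar[OF sub free] \<open>u \<in> M\<close> \<open>\<alpha> \<noteq> 0\<close> by blast
  ultimately show thesis
    using that double_eigenvalue_unipotent_part[OF _ eig]
      unipotent_line_cover[OF sub free \<open>u \<in> M\<close> \<open>trace u \<noteq> 0\<close> eig]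
    by blast
qed

lemma idempotent_free_subset_model_subspace2:
  fixes M :: "'a::alg_closed_field mat2 set"
  assumes sub: "is_subspace2 M" and free: "idempotent_free M"
  obtains F where "model_subspace2 F" "M \<subseteq> F"
proof (cases "\<forall>x\<in>M. trace x = 0")
  case True
  then have "M \<subseteq> traceless_space" by (auto simp: traceless_space_def)
  then show thesis by (rule that[rotated]) (simp add: model_subspace2_def)
next
  case False
  then obtain u where "u \<in> M" "trace u \<noteq> 0" by blast
  obtain \<alpha> \<beta> where eig: "\<alpha> + \<beta> = trace u" "\<alpha> * \<beta> = det u"
    by (rule mat2_eigenvalues_exist)
  show thesis
  proof (cases "\<alpha> = \<beta>")
    case True
    with eig have "\<alpha> + \<alpha> = trace u" "\<alpha> * \<alpha> = det u" by simp_all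
    then obtain c where "c \<noteq> 0" "nilpotent2 c" "M \<subseteq> unipotent_line c"
      by (rule idempotent_free_subset_unipotent_line[OF sub free \<open>u \<in> M\<close> \<open>trace u \<noteq> 0\<close>])
    then show thesis by (intro that[of "unipotent_line c"]) (auto simp: model_subspace2_def)
  next
    case False
    then obtain e1 e2 l1 l2 where "corner_data e1 e2 l1 l2" "M \<subseteq> corner_space e1 e2 l1 l2"
      by (rule idempotent_free_subset_corner_space[OF sub free \<open>u \<in> M\<close> \<open>trace u \<noteq> 0\<close> eig])
    then show thesis using that[of "corner_space e1 e2 l1 l2"] unfolding model_subspace2_def by blast
  qed
qed

section \<open>The model subspaces are maximal idempotent-free subspaces\<close>

lemma traceless_space_subspace: "is_subspace2 (traceless_space :: 'a::field mat2 set)"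
  unfolding is_subspace2_def traceless_space_def
  by (simp add: trace_add trace_msmult trace_0[unfolded mat_0])

lemma traceless_space_idempotent_free:
  assumes "(2::'a::field) \<noteq> 0"
  shows "idempotent_free (traceless_space :: 'a mat2 set)"
  by (rule idempotent_freeI) (use assms in \<open>auto simp: traceless_space_def trace_mat1_2\<close>)

lemma traceless_space_maximal:
  fixes M :: "'a::field mat2 set"
  assumes sub: "is_subspace2 M" and free: "idempotent_free M" and "traceless_space \<subseteq> M"
  shows "M = traceless_space"
proof (rule ccontr)
  assume "M \<noteq> traceless_space"
  with assms(3) obtain x where "x \<in> M" "trace x \<noteq> 0" by (auto simp: traceless_space_def)
  define y where "y = mat 1 - msmult (2 / trace x) x"
  have "trace y = 0" using \<open>trace x \<noteq> 0\<close> by (simp add: y_def trace_sub trace_msmult trace_mat1_2)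
  then have "y \<in> M" using assms(3) by (auto simp: traceless_space_def)
  then have "y + msmult (2 / trace x) x \<in> M" using sub \<open>x \<in> M\<close> by (intro subspace2_add subspace2_msmult)
  then show False using idempotent_free_mat1[OF free] by (simp add: y_def)
qed

lemma corner_data_idempotents:
  fixes e1 e2 :: "'a::field mat2"
  assumes "corner_data e1 e2 l1 l2"
  shows "e2 = mat 1 - e1" "trace e1 = 1" "det e1 = 0" "e1 ** e2 = 0" "e2 ** e1 = 0"
proof -
  have "idempotent2 e1" "e1 \<noteq> 0" "e2 \<noteq> 0" "e1 + e2 = mat 1"
    using assms by (simp_all add: corner_data_def)
  show e2: "e2 = mat 1 - e1" using \<open>e1 + e2 = mat 1\<close> by (metis add_diff_cancel_left')
  with \<open>e2 \<noteq> 0\<close> have "e1 \<noteq> mat 1" by auto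
  then show "trace e1 = 1" "det e1 = 0"
    using idempotent2_cases[OF \<open>idempotent2 e1\<close>] \<open>e1 \<noteq> 0\<close> by auto
  have "e1 ** e1 = e1" using \<open>idempotent2 e1\<close> by (simp add: idempotent2_def)
  then show "e1 ** e2 = 0" "e2 ** e1 = 0"
    unfolding e2 by (simp_all add: matrix_mult_diff_left matrix_mult_diff_right)
qed

lemma corner_data_generator:
  fixes e1 e2 :: "'a::field mat2"
  assumes D: "corner_data e1 e2 l1 l2"
  defines "u \<equiv> msmult l1 e1 + msmult l2 e2"
  shows "trace u = l1 + l2" "det u = l1 * l2"
    "spectral_proj u l1 l2 = e1" "spectral_proj u l2 l1 = e2"
    "spectral_corner u l1 l2 (e1 ** x ** e2)"
    "trace (e1 ** x ** e2) = 0" "det (e1 ** x ** e2) = 0"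
proof -
  note I = corner_data_idempotents[OF D]
  have "l1 \<noteq> l2" "idempotent2 e1" "idempotent2 e2" using D by (simp_all add: corner_data_def)
  have t2: "trace e2 = 1" using I(1,2) by (simp add: trace_sub trace_mat1_2)
  show "trace u = l1 + l2" using I(2) t2 by (simp add: u_def trace_add trace_msmult)
  show "det u = l1 * l2"
    using I(2,3) unfolding u_def I(1) trace_2 det_2
    apply (simp add: mat_entry)
    apply algebra
    done
  show "spectral_proj u l1 l2 = e1" "spectral_proj u l2 l1 = e2"
    unfolding spectral_proj_def u_def I(1) mat2_eq_iff using \<open>l1 \<noteq> l2\<close>
    by (simp_all add: mat_entry field_simps)
  have "u ** e1 = msmult l1 e1" "e2 ** u = msmult l2 e2"
    using \<open>idempotent2 e1\<close> \<open>idempotent2 e2\<close> I(4,5)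
    by (simp_all add: u_def idempotent2_def matrix_mult_add_right matrix_add_ldistrib
        matrix_mult_msmult_left matrix_mult_msmult_right)
  then show "spectral_corner u l1 l2 (e1 ** x ** e2)"
    unfolding spectral_corner_def
    by (simp add: matrix_mul_assoc matrix_mult_msmult_left matrix_mult_msmult_right)
      (simp add: matrix_mul_assoc[symmetric] matrix_mult_msmult_right)
  have "trace (e1 ** x ** e2) = trace ((e2 ** e1) ** x)"
    by (simp add: trace_mul_sym[of "e1 ** x" e2] matrix_mul_assoc)
  then show "trace (e1 ** x ** e2) = 0" using I(5) by (simp add: trace_2)
  show "det (e1 ** x ** e2) = 0" using I(3) by (simp add: det_mul)
qed

lemma corner_space_subspace: "is_subspace2 (corner_space (e1::'a::field mat2) e2 l1 l2)"
proof -
  let ?g = "msmult l1 e1 + msmult l2 e2"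
  have "msmult t ?g + e1 ** x ** e2 + (msmult t' ?g + e1 ** x' ** e2)
      = msmult (t + t') ?g + e1 ** (x + x') ** e2" for t t' x x'
    unfolding mat2_eq_iff by (simp add: mat2_entries algebra_simps)
  moreover have "msmult c (msmult t ?g + e1 ** x ** e2) = msmult (c * t) ?g + e1 ** msmult c x ** e2"
    for c t x
    unfolding mat2_eq_iff by (simp add: mat2_entries algebra_simps)
  moreover have "0 = msmult 0 ?g + e1 ** 0 ** e2" by (simp add: mat2_entries)
  ultimately show ?thesis unfolding is_subspace2_def corner_space_def by blast
qed

lemma corner_space_trace_det:
  fixes e1 e2 :: "'a::field mat2"
  assumes D: "corner_data e1 e2 l1 l2" and "z \<in> corner_space e1 e2 l1 l2"
  obtains t where "trace z = t * (l1 + l2)" "det z = t\<^sup>2 * (l1 * l2)"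
proof -
  define u where "u = msmult l1 e1 + msmult l2 e2"
  note G = corner_data_generator[OF D, folded u_def]
  obtain t x where z: "z = msmult t u + e1 ** x ** e2"
    using assms(2) unfolding corner_space_def u_def by blast
  let ?w = "e1 ** x ** e2"
  have trace_z: "trace z = t * (l1 + l2)" using G(1) G(6) by (simp add: z trace_add trace_msmult)
  have "det z = det (msmult t u + msmult 1 ?w)" by (simp add: z)
  also have "\<dots> = det (msmult t u) + 1 * (trace (msmult t u) * trace ?w
      - trace (msmult t u ** ?w)) + 1\<^sup>2 * det ?w"
    by (rule det_add_msmult)
  also have "\<dots> = t\<^sup>2 * (l1 * l2)"
    using G(2,5,6,7)
    by (simp add: det_msmult matrix_mult_msmult_left trace_msmult spectral_corner_def)
  finally show thesis by (rule that[OF trace_z])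
qed

lemma corner_space_idempotent_free:
  fixes e1 e2 :: "'a::field mat2"
  assumes D: "corner_data e1 e2 l1 l2" and two: "(2::'a) \<noteq> 0"
  shows "idempotent_free (corner_space e1 e2 l1 l2)"
proof (rule idempotent_freeI)
  have "l1 \<noteq> l2" "l1 \<noteq> 0" "l2 \<noteq> 0" using D by (simp_all add: corner_data_def)
  show "mat 1 \<notin> corner_space e1 e2 l1 l2"
  proof
    assume "mat 1 \<in> corner_space e1 e2 l1 l2"
    then obtain t
      where "trace (mat 1 :: 'a mat2) = t * (l1 + l2)" "det (mat 1 :: 'a mat2) = t\<^sup>2 * (l1 * l2)"
      by (rule corner_space_trace_det[OF D])
    then have t: "2 = t * (l1 + l2)" "1 = t\<^sup>2 * (l1 * l2)" by (simp_all add: trace_mat1_2 det_I)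
    have "(t * (l1 - l2))\<^sup>2 = (t * (l1 + l2))\<^sup>2 - 4 * (t\<^sup>2 * (l1 * l2))"
      by (simp add: power2_eq_square algebra_simps)
    also have "\<dots> = 0" by (simp flip: t)
    finally have "t = 0" using \<open>l1 \<noteq> l2\<close> by simp
    with t(1) two show False by simp
  qed
  fix z assume "z \<in> corner_space e1 e2 l1 l2" "trace z = 1" "det z = 0"
  from \<open>z \<in> corner_space e1 e2 l1 l2\<close> obtain t
    where "trace z = t * (l1 + l2)" "det z = t\<^sup>2 * (l1 * l2)"
    by (rule corner_space_trace_det[OF D])
  with \<open>trace z = 1\<close> \<open>det z = 0\<close> \<open>l1 \<noteq> 0\<close> \<open>l2 \<noteq> 0\<close> show False by simp
qed

lemma corner_space_maximal:
  fixes M :: "'a::alg_closed_field mat2 set"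
  assumes D: "corner_data e1 e2 l1 l2" and sub: "is_subspace2 M" and free: "idempotent_free M"
    and DM: "corner_space e1 e2 l1 l2 \<subseteq> M"
  shows "M = corner_space e1 e2 l1 l2"
proof
  have "l1 \<noteq> l2" "l1 + l2 \<noteq> 0" "e1 \<noteq> 0" "e2 \<noteq> 0" using D by (simp_all add: corner_data_def)
  define u where "u = msmult l1 e1 + msmult l2 e2"
  note G = corner_data_generator[OF D, folded u_def]
  have in_corner: "msmult t u + e1 ** x ** e2 \<in> M" for t x
  proof -
    have "msmult t u + e1 ** x ** e2 \<in> corner_space e1 e2 l1 l2"
      unfolding corner_space_def u_def by blast
    with DM show ?thesis by blast
  qed
  have "u \<in> M" using in_corner[of 1 0] by simp
  have "trace u \<noteq> 0" using G(1) \<open>l1 + l2 \<noteq> 0\<close> by simp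
  have "\<forall>v\<in>M. trace v = 0 \<longrightarrow> spectral_corner u l1 l2 v"
  proof (rule disjE[OF idempotent_free_spectral_corner[OF sub free \<open>u \<in> M\<close> \<open>trace u \<noteq> 0\<close>
        G(1,2)[symmetric]]])
    assume opposite: "\<forall>v\<in>M. trace v = 0 \<longrightarrow> spectral_corner u l2 l1 v"
    obtain x where w: "e1 ** x ** e2 \<noteq> 0" using sandwich_nonzero[OF \<open>e1 \<noteq> 0\<close> \<open>e2 \<noteq> 0\<close>] .
    have "e1 ** x ** e2 \<in> M" using in_corner[of 0 x] by simp
    with opposite G(6) have "spectral_corner u l2 l1 (e1 ** x ** e2)" by blast
    then have "u ** (e1 ** x ** e2) = msmult l2 (e1 ** x ** e2)" by (simp add: spectral_corner_def)
    moreover have "u ** (e1 ** x ** e2) = msmult l1 (e1 ** x ** e2)"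
      using G(5)[of x] by (simp add: spectral_corner_def)
    ultimately have "msmult (l1 - l2) (e1 ** x ** e2) = 0" by (simp add: msmult_diff_left)
    with w \<open>l1 \<noteq> l2\<close> have False by (simp add: mat2_eq_iff)
    then show ?thesis ..
  qed
  then have "M \<subseteq> corner_space (spectral_proj u l1 l2) (spectral_proj u l2 l1) l1 l2"
    by (rule corner_space_cover[OF sub \<open>u \<in> M\<close> \<open>trace u \<noteq> 0\<close> \<open>l1 \<noteq> l2\<close>])
  then show "M \<subseteq> corner_space e1 e2 l1 l2" by (simp only: G(3,4))
qed (rule DM)

lemma det_mpow: "det (mpow (c::'a::field mat2) n) = det c ^ n"
  by (induction n) (simp_all add: det_mul det_I)

lemma mpow_Suc_det_zero:
  fixes c :: "'a::field mat2"
  assumes "det c = 0"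
  shows "mpow c (Suc n) = msmult (trace c ^ n) c"
proof (induction n)
  case 0
  show ?case by simp
next
  case (Suc n)
  have cc: "c ** c = msmult (trace c) c" using mat2_cayley_hamilton[of c] assms by simp
  have "mpow c (Suc (Suc n)) = c ** mpow c (Suc n)" by simp
  also have "\<dots> = msmult (trace c ^ n * trace c) c"
    using Suc by (simp add: matrix_mult_msmult_right cc msmult_msmult)
  finally show ?case by (simp add: algebra_simps)
qed

lemma nilpotent2_trace_det:
  fixes c :: "'a::field mat2"
  assumes "nilpotent2 c"
  shows "trace c = 0" "det c = 0"
proof -
  obtain k where k: "mpow c k = 0" using assms by (auto simp: nilpotent2_def)
  have "det c ^ k = 0" using det_mpow[of c k] k by (simp add: det_2)
  then show dc: "det c = 0" by simp
  show "trace c = 0"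
  proof (cases "c = 0")
    case False
    have "k \<noteq> 0" using k mat1_neq_zero_2 by (cases k) auto
    then obtain n where "k = Suc n" by (cases k) auto
    with k have "msmult (trace c ^ n) c = 0" using mpow_Suc_det_zero[OF dc, of n] by simp
    with False have "trace c ^ n = 0" by (auto simp: mat2_eq_iff)
    then show ?thesis by simp
  qed (simp add: trace_2)
qed

lemma det_mat1_add: "det (mat 1 + (c::'a::field mat2)) = 1 + trace c + det c"
  by (simp add: mat2_entries algebra_simps)

lemma unipotent_line_subspace: "is_subspace2 (unipotent_line (c::'a::field mat2))"
proof -
  have "msmult t (mat 1 + c) + msmult t' (mat 1 + c) = msmult (t + t') (mat 1 + c)" for t t'
    unfolding mat2_eq_iff by (simp add: mat2_entries algebra_simps)
  then show ?thesis
    unfolding is_subspace2_def unipotent_line_def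
    by (auto simp: msmult_msmult intro: exI[of _ 0])
qed

lemma unipotent_line_idempotent_free:
  fixes c :: "'a::field mat2"
  assumes "c \<noteq> 0" "nilpotent2 c" and two: "(2::'a) \<noteq> 0"
  shows "idempotent_free (unipotent_line c)"
proof -
  note c = nilpotent2_trace_det[OF assms(2)]
  have trace_det: "trace (msmult t (mat 1 + c)) = 2 * t" "det (msmult t (mat 1 + c)) = t\<^sup>2" for t
    using c by (simp_all add: trace_msmult trace_add trace_mat1_2 det_msmult det_mat1_add)
  show ?thesis
  proof (rule idempotent_freeI)
    show "mat 1 \<notin> unipotent_line c"
    proof
      assume "mat 1 \<in> unipotent_line c"
      then obtain t where t: "mat 1 = msmult t (mat 1 + c)" unfolding unipotent_line_def by blast
      then have "trace (mat 1 :: 'a mat2) = 2 * t" using trace_det(1)[of t] by simp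
      then have "2 * t = 2" by (simp add: trace_mat1_2)
      with two have "t = 1" by simp
      with t have "c = 0" by simp
      with \<open>c \<noteq> 0\<close> show False ..
    qed
  next
    fix z assume "z \<in> unipotent_line c" "trace z = 1" "det z = 0"
    then obtain t where "z = msmult t (mat 1 + c)" unfolding unipotent_line_def by blast
    with \<open>trace z = 1\<close> \<open>det z = 0\<close> trace_det show False by simp
  qed
qed

lemma unipotent_line_maximal:
  fixes M :: "'a::alg_closed_field mat2 set"
  assumes "c \<noteq> 0" "nilpotent2 c" and two: "(2::'a) \<noteq> 0"
    and sub: "is_subspace2 M" and free: "idempotent_free M" and NM: "unipotent_line c \<subseteq> M"
  shows "M = unipotent_line c"
proof
  note c = nilpotent2_trace_det[OF assms(2)]
  define u where "u = mat 1 + c"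
  have "u \<in> unipotent_line c" unfolding unipotent_line_def u_def by (rule CollectI, rule exI[of _ 1]) simp
  with NM have "u \<in> M" by blast
  have eig: "1 + 1 = trace u" "1 * 1 = det u"
    using c by (simp_all add: u_def trace_add trace_mat1_2 det_mat1_add)
  with two have "trace u \<noteq> 0" by simp
  from unipotent_line_cover[OF sub free \<open>u \<in> M\<close> this eig]
  show "M \<subseteq> unipotent_line c" by (simp add: u_def)
qed (rule NM)

lemma model_subspace2_idempotent_free:
  fixes F :: "'a::field mat2 set"
  assumes "model_subspace2 F" and two: "(2::'a) \<noteq> 0"
  shows "is_subspace2 F \<and> idempotent_free F"
  using assms(1) unfolding model_subspace2_def
proof (elim disjE exE conjE)
  assume "F = traceless_space"
  then show ?thesis using traceless_space_subspace traceless_space_idempotent_free[OF two] by simp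
next
  fix e1 e2 l1 l2 assume "corner_data e1 e2 l1 l2" "F = corner_space e1 e2 l1 l2"
  then show ?thesis using corner_space_subspace corner_space_idempotent_free[OF _ two] by simp
next
  fix c assume "c \<noteq> 0" "nilpotent2 c" "F = unipotent_line c"
  then show ?thesis using unipotent_line_subspace unipotent_line_idempotent_free[OF _ _ two] by simp
qed

lemma model_subspace2_maximal:
  fixes M :: "'a::alg_closed_field mat2 set"
  assumes "model_subspace2 F" and two: "(2::'a) \<noteq> 0"
    and M: "is_subspace2 M" "idempotent_free M" "F \<subseteq> M"
  shows "M = F"
  using assms(1) unfolding model_subspace2_def
proof (elim disjE exE conjE)
  assume "F = traceless_space"
  with M show ?thesis using traceless_space_maximal by simp
next
  fix e1 e2 l1 l2 assume "corner_data e1 e2 l1 l2" "F = corner_space e1 e2 l1 l2"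
  with M show ?thesis using corner_space_maximal by simp
next
  fix c assume "c \<noteq> 0" "nilpotent2 c" "F = unipotent_line c"
  with M show ?thesis using unipotent_line_maximal[OF _ _ two] by simp
qed

lemma maximal_idempotent_free_iff_model_subspace2:
  fixes M :: "'a::alg_closed_field mat2 set"
  assumes two: "(2::'a) \<noteq> 0"
  shows "(is_subspace2 M \<and> idempotent_free M \<and>
      (\<forall>M'. is_subspace2 M' \<and> idempotent_free M' \<and> M \<subseteq> M' \<longrightarrow> M' = M))
    \<longleftrightarrow> model_subspace2 M"
proof
  assume max: "is_subspace2 M \<and> idempotent_free M \<and>
    (\<forall>M'. is_subspace2 M' \<and> idempotent_free M' \<and> M \<subseteq> M' \<longrightarrow> M' = M)"
  then obtain F where F: "model_subspace2 F" "M \<subseteq> F"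
    using idempotent_free_subset_model_subspace2 by blast
  with max model_subspace2_idempotent_free[OF F(1) two] have "F = M" by blast
  with F(1) show "model_subspace2 M" by simp
next
  assume "model_subspace2 M"
  then show "is_subspace2 M \<and> idempotent_free M \<and>
      (\<forall>M'. is_subspace2 M' \<and> idempotent_free M' \<and> M \<subseteq> M' \<longrightarrow> M' = M)"
    using model_subspace2_idempotent_free[OF _ two] model_subspace2_maximal[OF _ two] by blast
qed

theorem theorem3p5:
  fixes M :: "('a::alg_closed_field) mat2 set"
  assumes char: "(2::'a) \<noteq> 0"
  shows "maximal_mathieu_subspace2 M \<longleftrightarrow>
    (M = {b. trace b = 0}
     \<or> (\<exists>e1 e2 l1 l2. idempotent2 e1 \<and> idempotent2 e2 \<and> e1 \<noteq> 0 \<and> e2 \<noteq> 0 \<and>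
          e1 + e2 = mat 1 \<and> l1 \<noteq> l2 \<and> l1 \<noteq> 0 \<and> l2 \<noteq> 0 \<and> l1 + l2 \<noteq> 0 \<and>
          M = {msmult t (msmult l1 e1 + msmult l2 e2) + e1 ** x ** e2 | t x. True})
     \<or> (\<exists>c. c \<noteq> 0 \<and> nilpotent2 c \<and> M = {msmult t (mat 1 + c) | t. True}))"
  (is "_ \<longleftrightarrow> ?listed")
proof -
  have "maximal_mathieu_subspace2 M \<longleftrightarrow> model_subspace2 M"
    unfolding maximal_mathieu_subspace2_iff by (rule maximal_idempotent_free_iff_model_subspace2[OF char])
  moreover have "model_subspace2 M \<longleftrightarrow> ?listed"
    unfolding model_subspace2_def traceless_space_def corner_data_def corner_space_def
      unipotent_line_def by (simp only: conj_assoc)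
  ultimately show ?thesis by simp
qed

end
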